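(* Let $r>2$, fix $1\le i_-\le r-1$ and put $i_+=i_-+1$. Let $\phi^e_v:H^e_r\to H^e_{r+1}$ be the embedding $T_i\mapsto \check T_i$ ($1\le i<i_-$), $T_{i_-}\mapsto\check T_{i_-}\check T_{i_+}\check T_{i_-}^{-1}$, $T_i\mapsto\check T_{i+1}$ ($i_+\le i\le r$), $T_\rho\mapsto\check T_{i_+}^{-1}\check T_\rho$, and let $\phi^{BL}_v=\varphi_{r+1}\circ\phi^e_v\circ\varphi_r^{-1}:H^{BL}_r\to H^{BL}_{r+1}$. Writing $\check T_i,\check X_j$ for the generators of $H^{BL}_{r+1}$, we have \[ \phi^{BL}_v(T_i)=\begin{cases}\check T_i & 1\le i<i_-,\\ \check T_{i_-}\check T_{i_+}\check T_{i_-}^{-1} & i=i_-,\\ \check T_{i+1} & i_+\le i\le r-1,\end{cases} \] \[ \phi^{BL}_v(X_j)=\begin{cases}\check X_j+(v-v^{-1})\,\check X_{i_+}\,\check T_j^{-1}\cdots\check T_{i_--1}^{-1}\check T_{i_-}^{-1}\check T_{i_--1}^{-1}\cdots\check T_j^{-1} & 1\le j\le i_-,\\ \check X_{j+1} & i_+\le j\le r,\end{cases} \] where for $j=i_-$ the product $\check T_j^{-1}\cdots\check T_{i_-}^{-1}\cdots\check T_j^{-1}$ means $\check T_{i_-}^{-1}$.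
   Context: $\mathcal A=\mathbb Z[v,v^{-1}]$. For $r>2$, $H^e_r$ is the $\mathcal A$-algebra with generators $T_i$ ($i\in\mathbb Z/r\mathbb Z$), $T_\rho^{\pm1}$ and relations $(T_i-v)(T_i+v^{-1})=0$, $T_iT_{i+1}T_i=T_{i+1}T_iT_{i+1}$, $T_iT_j=T_jT_i$ for $i-j\not\equiv\pm1\pmod r$, $T_\rho T_i=T_{i+1}T_\rho$, $T_\rho T_\rho^{-1}=T_\rho^{-1}T_\rho=1$. $H^{BL}_r$ (Bernstein–Lusztig presentation) is the $\mathcal A$-algebra with generators $T_i$ ($1\le i\le r-1$) and $X_j^{\pm1}$ ($1\le j\le r$) and relations: $(T_i-v)(T_i+v^{-1})=0$; $T_iT_{i+1}T_i=T_{i+1}T_iT_{i+1}$ ($1\le i\le r-2$); $T_iT_j=T_jT_i$ ($|i-j|\ge2$); $X_jX_j^{-1}=X_j^{-1}X_j=1$ and $X_jX_k=X_kX_j$ for all $j,k$; $T_iX_iT_i=X_{i+1}$ ($1\le i\le r-1$); $T_iX_j=X_jT_i$ for $j\ne i,i+1$. It is known that the assignment $T_i\mapsto T_i$ ($1\le i\le r-1$), $T_\rho\mapsto(T_{r-1}T_{r-2}\cdots T_1X_1)^{-1}$ extends to an $\mathcal A$-algebra isomorphism $\varphi_r:H^e_r\to H^{BL}_r$ (and similarly $\varphi_{r+1}$). *)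

theory Defs
  imports Main "HOL-Library.Poly_Mapping"
begin

text \<open>Laurent polynomials with integer coefficients: finitely supported
  functions int => int with convolution product (exponent monoid = int).\<close>
type_synonym laurent = "int \<Rightarrow>\<^sub>0 int"

definition lv :: laurent where "lv = Poly_Mapping.single 1 1"
definition lvinv :: laurent where "lvinv = Poly_Mapping.single (-1) 1"

datatype 'g fword = FW "'g list"

primrec unFW :: "'g fword \<Rightarrow> 'g list" where "unFW (FW xs) = xs"

instantiation fword :: (type) monoid_add
begin
definition zero_fword :: "'a fword" where "zero_fword = FW []"
definition plus_fword :: "'a fword \<Rightarrow> 'a fword \<Rightarrow> 'a fword"
  where "plus_fword a b = FW (unFW a @ unFW b)"
instance
proof
  fix a b c :: "'a fword"
  show "a + b + c = a + (b + c)" by (cases a; cases b; cases c) (simp add: plus_fword_def)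
  show "0 + a = a" by (cases a) (simp add: plus_fword_def zero_fword_def)
  show "a + 0 = a" by (cases a) (simp add: plus_fword_def zero_fword_def)
qed
end

text \<open>Each presented algebra kills the
  generators that do not belong to it, so the quotient is exactly that algebra.\<close>
datatype gen = GT nat | GRho | GRhoInv | GX nat | GXinv nat

text \<open>Free associative A-algebra on gen: A-linear combinations of words,
  multiplication = concatenation (convolution over the word monoid).\<close>
type_synonym falg = "gen fword \<Rightarrow>\<^sub>0 laurent"

definition sc :: "laurent \<Rightarrow> falg" where "sc c = Poly_Mapping.single 0 c"
definition g :: "gen \<Rightarrow> falg" where "g x = Poly_Mapping.single (FW [x]) 1"

definition vv :: falg where "vv = sc lv"
definition vvi :: falg where "vvi = sc lvinv"

text \<open>Inverse of a generator T satisfying (T - v)(T + v^-1) = 0: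
  T^-1 = T - (v - v^-1).\<close>
definition tinv :: "falg \<Rightarrow> falg" where "tinv t = t - (vv - vvi)"

definition fsubst :: "(gen \<Rightarrow> falg) \<Rightarrow> falg \<Rightarrow> falg" where
  "fsubst f p = (\<Sum>w\<in>Poly_Mapping.keys p. sc (Poly_Mapping.lookup p w) * prod_list (map f (unFW w)))"

inductive_set tsideal :: "falg set \<Rightarrow> falg set" for R :: "falg set" where
  base: "x \<in> R \<Longrightarrow> x \<in> tsideal R"
| zero: "0 \<in> tsideal R"
| add: "x \<in> tsideal R \<Longrightarrow> y \<in> tsideal R \<Longrightarrow> x + y \<in> tsideal R"
| mult: "x \<in> tsideal R \<Longrightarrow> a * x * b \<in> tsideal R"

text \<open>Index i of T_i taken in Z/rZ, represented by GT (i mod r); GT 0 is T_0 = T_r.\<close>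
definition eT :: "nat \<Rightarrow> nat \<Rightarrow> falg" where "eT r i = g (GT (i mod r))"

definition rel_e :: "nat \<Rightarrow> falg set" where
  "rel_e r =
     {(eT r i - vv) * (eT r i + vvi) | i. i < r}
   \<union> {eT r i * eT r (i+1) * eT r i - eT r (i+1) * eT r i * eT r (i+1) | i. i < r}
   \<union> {eT r i * eT r j - eT r j * eT r i | i j. i < r \<and> j < r
        \<and> j \<noteq> (i + 1) mod r \<and> i \<noteq> (j + 1) mod r}
   \<union> {g GRho * eT r i - eT r (i+1) * g GRho | i. i < r}
   \<union> {g GRho * g GRhoInv - 1, g GRhoInv * g GRho - 1}
   \<union> {g (GT k) | k. r \<le> k} \<union> {g (GX k) | k. True} \<union> {g (GXinv k) | k. True}"

definition eq_e :: "nat \<Rightarrow> falg \<Rightarrow> falg \<Rightarrow> bool" where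
  "eq_e r x y \<longleftrightarrow> x - y \<in> tsideal (rel_e r)"

definition bT :: "nat \<Rightarrow> falg" where "bT i = g (GT i)"
definition bX :: "nat \<Rightarrow> falg" where "bX j = g (GX j)"
definition bXi :: "nat \<Rightarrow> falg" where "bXi j = g (GXinv j)"

definition rel_BL :: "nat \<Rightarrow> falg set" where
  "rel_BL r =
     {(bT i - vv) * (bT i + vvi) | i. 1 \<le> i \<and> i \<le> r - 1}
   \<union> {bT i * bT (i+1) * bT i - bT (i+1) * bT i * bT (i+1) | i. 1 \<le> i \<and> i \<le> r - 2}
   \<union> {bT i * bT j - bT j * bT i | i j. 1 \<le> i \<and> i \<le> r - 1 \<and> 1 \<le> j \<and> j \<le> r - 1
        \<and> (i + 2 \<le> j \<or> j + 2 \<le> i)}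
   \<union> {bX j * bXi j - 1 | j. 1 \<le> j \<and> j \<le> r} \<union> {bXi j * bX j - 1 | j. 1 \<le> j \<and> j \<le> r}
   \<union> {bX j * bX k - bX k * bX j | j k. 1 \<le> j \<and> j \<le> r \<and> 1 \<le> k \<and> k \<le> r}
   \<union> {bT i * bX i * bT i - bX (i+1) | i. 1 \<le> i \<and> i \<le> r - 1}
   \<union> {bT i * bX j - bX j * bT i | i j. 1 \<le> i \<and> i \<le> r - 1 \<and> 1 \<le> j \<and> j \<le> r
        \<and> j \<noteq> i \<and> j \<noteq> i + 1}
   \<union> {g GRho, g GRhoInv, g (GT 0)} \<union> {g (GT k) | k. r \<le> k}
   \<union> {g (GX 0), g (GXinv 0)} \<union> {g (GX k) | k. r < k} \<union> {g (GXinv k) | k. r < k}"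

definition eq_BL :: "nat \<Rightarrow> falg \<Rightarrow> falg \<Rightarrow> bool" where
  "eq_BL r x y \<longleftrightarrow> x - y \<in> tsideal (rel_BL r)"

text \<open>phi_r : H^e_r -> H^BL_r, T_i |-> T_i (1 <= i <= r-1),
  T_rho |-> (T_{r-1} ... T_1 X_1)^-1 = X_1^-1 T_1^-1 ... T_{r-1}^-1,
  hence T_rho^-1 |-> T_{r-1} ... T_1 X_1 and T_0 = T_rho T_{r-1} T_rho^-1 |-> accordingly.\<close>
definition phiRho :: "nat \<Rightarrow> falg" where
  "phiRho r = bXi 1 * prod_list (map (\<lambda>i. tinv (bT i)) [1..<r])"
definition phiRhoInv :: "nat \<Rightarrow> falg" where
  "phiRhoInv r = prod_list (map bT (rev [1..<r])) * bX 1"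

definition phi_gen :: "nat \<Rightarrow> gen \<Rightarrow> falg" where
  "phi_gen r x = (case x of
      GT i \<Rightarrow> (if 1 \<le> i \<and> i \<le> r - 1 then bT i
              else if i = 0 then phiRho r * bT (r - 1) * phiRhoInv r else 0)
    | GRho \<Rightarrow> phiRho r
    | GRhoInv \<Rightarrow> phiRhoInv r
    | GX _ \<Rightarrow> 0
    | GXinv _ \<Rightarrow> 0)"

definition phi :: "nat \<Rightarrow> falg \<Rightarrow> falg" where "phi r = fsubst (phi_gen r)"

text \<open>phi^e_v : H^e_r -> H^e_{r+1} (parameter im = i_-, i_+ = im + 1).
  T_i |-> T_i (1 <= i < i_-), T_{i_-} |-> T_{i_-} T_{i_+} T_{i_-}^-1,
  T_i |-> T_{i+1} (i_+ <= i <= r; T_r = T_0 |-> T_{r+1} = T_0),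
  T_rho |-> T_{i_+}^-1 T_rho (so T_rho^-1 |-> T_rho^-1 T_{i_+}).\<close>
definition phiE_gen :: "nat \<Rightarrow> nat \<Rightarrow> gen \<Rightarrow> falg" where
  "phiE_gen r im x = (let k = (\<lambda>i. if i = 0 then r else i) in case x of
      GT i \<Rightarrow> (if i < r then
                 (if 1 \<le> k i \<and> k i < im then eT (r+1) (k i)
                  else if k i = im then eT (r+1) im * eT (r+1) (im+1) * tinv (eT (r+1) im)
                  else eT (r+1) (k i + 1))
               else 0)
    | GRho \<Rightarrow> tinv (eT (r+1) (im+1)) * g GRho
    | GRhoInv \<Rightarrow> g GRhoInv * eT (r+1) (im+1)
    | GX _ \<Rightarrow> 0
    | GXinv _ \<Rightarrow> 0)"

definition phiE :: "nat \<Rightarrow> nat \<Rightarrow> falg \<Rightarrow> falg" where "phiE r im = fsubst (phiE_gen r im)"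

definition induces_embedding :: "(falg \<Rightarrow> falg \<Rightarrow> bool) \<Rightarrow> (falg \<Rightarrow> falg \<Rightarrow> bool) \<Rightarrow> (falg \<Rightarrow> falg) \<Rightarrow> bool" where
  "induces_embedding eq1 eq2 f \<longleftrightarrow> (\<forall>x y. eq1 x y \<longleftrightarrow> eq2 (f x) (f y))"

definition induces_iso :: "(falg \<Rightarrow> falg \<Rightarrow> bool) \<Rightarrow> (falg \<Rightarrow> falg \<Rightarrow> bool) \<Rightarrow> (falg \<Rightarrow> falg) \<Rightarrow> bool" where
  "induces_iso eq1 eq2 f \<longleftrightarrow> induces_embedding eq1 eq2 f \<and> (\<forall>z. \<exists>x. eq2 (f x) z)"

text \<open>Value of phi^BL_v = phi_{r+1} o phi^e_v o phi_r^-1 : H^BL_r -> H^BL_{r+1}: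
  phiBL_is r im a b means phi^BL_v([a]) = [b]: every preimage y of [a] under phi_r
  is sent by phi_{r+1} o phi^e_v to [b].\<close>
definition phiBL_is :: "nat \<Rightarrow> nat \<Rightarrow> falg \<Rightarrow> falg \<Rightarrow> bool" where
  "phiBL_is r im a b \<longleftrightarrow>
     (\<forall>y. eq_BL r (phi r y) a \<longrightarrow> eq_BL (r+1) (phi (r+1) (phiE r im y)) b)"

end

theory Submission
  imports Defs
begin

text \<open>Since phi_r is injective and phi_(r+1) o phi^e_v is well defined, the value of
  phi^BL_v at a is phi_(r+1)(phi^e_v(y)) for any word y of H^e_r with phi_r(y) = a.
  For T_i take y = T_i. For the X_j start from
  phi_r(T_1^-1 ... T_(r-1)^-1 T_rho^-1) = X_1 and phi_r(T_rho^-1 T_1 ... T_(r-1)) = X_r and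
  conjugate, using X_(j+1) = T_j X_j T_j: upwards from X_1 for j <= i_-, downwards from X_r
  for j > i_-. Pushing these words through phi_(r+1) o phi^e_v and reducing in H^BL_(r+1)
  gives the formulas. The correction term for j <= i_- is born at j = 1 from
  T_(i_-)^2 = 1 + (v - v^-1) T_(i_-) and is then carried along by the conjugations.\<close>

section \<open>Substitution is an algebra homomorphism\<close>

lemma sc_add: "sc (a + b) = sc a + sc b"
  by (simp add: sc_def Poly_Mapping.single_add)

lemma sc_mult: "sc (a * b) = sc a * sc b"
  by (simp add: sc_def Poly_Mapping.mult_single)

lemma sc_0 [simp]: "sc 0 = 0"
  by (simp add: sc_def)

lemma sc_1 [simp]: "sc 1 = 1"
  by (simp add: sc_def)

lemma poly_mapping_sum_single:
  "(p :: 'a \<Rightarrow>\<^sub>0 'b::comm_monoid_add) =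
     (\<Sum>w\<in>Poly_Mapping.keys p. Poly_Mapping.single w (Poly_Mapping.lookup p w))"
  by (rule poly_mapping_eqI)
    (simp add: Poly_Mapping.lookup_sum Poly_Mapping.lookup_single when_def in_keys_iff)

lemma sc_commute: "sc c * x = x * sc c"
proof -
  have single: "Poly_Mapping.single w a * sc c = sc c * Poly_Mapping.single w a" for w a
    by (simp add: sc_def Poly_Mapping.mult_single mult.commute)
  show ?thesis
    by (subst (1 2) poly_mapping_sum_single) (simp add: sum_distrib_left sum_distrib_right single)
qed

definition fsubst_monomial :: "(gen \<Rightarrow> falg) \<Rightarrow> gen fword \<Rightarrow> laurent \<Rightarrow> falg" where
  "fsubst_monomial f w c = sc c * prod_list (map f (unFW w))"

lemma fsubst_eq_sum_superset:
  "finite S \<Longrightarrow> Poly_Mapping.keys p \<subseteq> S \<Longrightarrow>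
     fsubst f p = (\<Sum>w\<in>S. fsubst_monomial f w (Poly_Mapping.lookup p w))"
  unfolding fsubst_def fsubst_monomial_def
  by (rule sum.mono_neutral_left) (auto simp: in_keys_iff)

lemma fsubst_add: "fsubst f (p + q) = fsubst f p + fsubst f q"
proof -
  let ?S = "Poly_Mapping.keys p \<union> Poly_Mapping.keys q"
  have "fsubst f (p + q) = (\<Sum>w\<in>?S. fsubst_monomial f w (Poly_Mapping.lookup (p + q) w))"
    by (rule fsubst_eq_sum_superset) (simp_all add: Poly_Mapping.keys_add)
  also have "\<dots> = (\<Sum>w\<in>?S. fsubst_monomial f w (Poly_Mapping.lookup p w))
                 + (\<Sum>w\<in>?S. fsubst_monomial f w (Poly_Mapping.lookup q w))"
    by (simp add: fsubst_monomial_def Poly_Mapping.lookup_add sc_add distrib_right sum.distrib)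
  also have "\<dots> = fsubst f p + fsubst f q"
    by (simp add: fsubst_eq_sum_superset[of ?S p] fsubst_eq_sum_superset[of ?S q])
  finally show ?thesis .
qed

lemma fsubst_diff: "fsubst f (p - q) = fsubst f p - fsubst f q"
  by (metis add_diff_cancel eq_diff_eq fsubst_add)

lemma fsubst_0 [simp]: "fsubst f 0 = 0"
  by (simp add: fsubst_def)

lemma fsubst_sum: "finite A \<Longrightarrow> fsubst f (sum h A) = (\<Sum>a\<in>A. fsubst f (h a))"
  by (induction A rule: finite_induct) (simp_all add: fsubst_add)

lemma fsubst_single: "fsubst f (Poly_Mapping.single w c) = fsubst_monomial f w c"
  by (cases "c = 0") (simp_all add: fsubst_def fsubst_monomial_def)

lemma fsubst_monomial_mult:
  "fsubst_monomial f (w + w') (c * c') = fsubst_monomial f w c * fsubst_monomial f w' c'"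
proof -
  have "unFW (w + w') = unFW w @ unFW w'"
    by (simp add: plus_fword_def)
  then have "fsubst_monomial f (w + w') (c * c')
      = sc c * (sc c' * prod_list (map f (unFW w))) * prod_list (map f (unFW w'))"
    by (simp add: fsubst_monomial_def sc_mult mult.assoc)
  also have "\<dots> = sc c * (prod_list (map f (unFW w)) * sc c') * prod_list (map f (unFW w'))"
    by (simp only: sc_commute)
  also have "\<dots> = fsubst_monomial f w c * fsubst_monomial f w' c'"
    by (simp add: fsubst_monomial_def mult.assoc)
  finally show ?thesis .
qed

lemma fsubst_mult: "fsubst f (p * q) = fsubst f p * fsubst f q"
proof -
  let ?P = "Poly_Mapping.keys p" and ?Q = "Poly_Mapping.keys q"
  have "p * q = (\<Sum>w\<in>?P. \<Sum>w'\<in>?Q.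
      Poly_Mapping.single (w + w') (Poly_Mapping.lookup p w * Poly_Mapping.lookup q w'))"
    by (subst (1 2) poly_mapping_sum_single) (simp add: sum_product Poly_Mapping.mult_single)
  then have "fsubst f (p * q) = (\<Sum>w\<in>?P. \<Sum>w'\<in>?Q.
      fsubst_monomial f w (Poly_Mapping.lookup p w) * fsubst_monomial f w' (Poly_Mapping.lookup q w'))"
    by (simp add: fsubst_sum fsubst_single fsubst_monomial_mult)
  also have "\<dots> = fsubst f p * fsubst f q"
    unfolding fsubst_def fsubst_monomial_def by (rule sum_product[symmetric])
  finally show ?thesis .
qed

lemma fsubst_g [simp]: "fsubst f (g x) = f x"
  by (simp add: g_def fsubst_single fsubst_monomial_def)

lemma fsubst_sc [simp]: "fsubst f (sc c) = sc c"
  by (simp add: sc_def fsubst_single fsubst_monomial_def zero_fword_def)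

lemma fsubst_prod_list: "fsubst f (prod_list xs) = prod_list (map (fsubst f) xs)"
  by (induction xs) (simp_all add: fsubst_mult flip: sc_1)

lemma fsubst_tinv: "fsubst f (tinv x) = tinv (fsubst f x)"
  by (simp add: tinv_def fsubst_diff vv_def vvi_def)

lemma phi_mult: "phi n (x * y) = phi n x * phi n y"
  by (simp add: phi_def fsubst_mult)

lemma phi_tinv: "phi n (tinv x) = tinv (phi n x)"
  by (simp add: phi_def fsubst_tinv)

lemma phi_prod_list: "phi n (prod_list xs) = prod_list (map (phi n) xs)"
  by (simp add: phi_def fsubst_prod_list)

lemma phiE_mult: "phiE r im (x * y) = phiE r im x * phiE r im y"
  by (simp add: phiE_def fsubst_mult)

lemma phiE_tinv: "phiE r im (tinv x) = tinv (phiE r im x)"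
  by (simp add: phiE_def fsubst_tinv)

lemma phiE_prod_list: "phiE r im (prod_list xs) = prod_list (map (phiE r im) xs)"
  by (simp add: phiE_def fsubst_prod_list)

section \<open>Computing in H^BL_n\<close>

lemma tsideal_mult_left: "x \<in> tsideal R \<Longrightarrow> a * x \<in> tsideal R"
  using tsideal.mult[of x R a 1] by simp

lemma tsideal_mult_right: "x \<in> tsideal R \<Longrightarrow> x * b \<in> tsideal R"
  using tsideal.mult[of x R 1 b] by simp

lemma tsideal_uminus: "x \<in> tsideal R \<Longrightarrow> - x \<in> tsideal R"
  using tsideal_mult_left[of x R "-1"] by simp

lemma eq_BL_refl [simp]: "eq_BL n x x"
  by (simp add: eq_BL_def tsideal.zero)

lemma eq_BL_sym: "eq_BL n x y \<Longrightarrow> eq_BL n y x"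
  unfolding eq_BL_def using tsideal_uminus by fastforce

lemma eq_BL_trans [trans]: "eq_BL n x y \<Longrightarrow> eq_BL n y z \<Longrightarrow> eq_BL n x z"
  unfolding eq_BL_def using tsideal.add by fastforce

lemma eq_BL_add: "eq_BL n x x' \<Longrightarrow> eq_BL n y y' \<Longrightarrow> eq_BL n (x + y) (x' + y')"
  unfolding eq_BL_def using tsideal.add by (fastforce simp: algebra_simps)

lemma eq_BL_diff: "eq_BL n x x' \<Longrightarrow> eq_BL n y y' \<Longrightarrow> eq_BL n (x - y) (x' - y')"
  using eq_BL_add[of n x x' "- y" "- y'"] tsideal_uminus
  by (fastforce simp: eq_BL_def)

lemma eq_BL_mult: "eq_BL n x x' \<Longrightarrow> eq_BL n y y' \<Longrightarrow> eq_BL n (x * y) (x' * y')"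
proof -
  assume "eq_BL n x x'" "eq_BL n y y'"
  then have "(x - x') * y + x' * (y - y') \<in> tsideal (rel_BL n)"
    unfolding eq_BL_def using tsideal_mult_left tsideal_mult_right tsideal.add by blast
  then show ?thesis
    by (simp add: eq_BL_def algebra_simps)
qed

lemma eq_BL_mult_left: "eq_BL n y y' \<Longrightarrow> eq_BL n (x * y) (x * y')"
  by (rule eq_BL_mult) simp_all

lemma eq_BL_mult_right: "eq_BL n x x' \<Longrightarrow> eq_BL n (x * y) (x' * y)"
  by (rule eq_BL_mult) simp_all

lemma eq_BL_mult_middle: "eq_BL n y y' \<Longrightarrow> eq_BL n (x * y * z) (x * y' * z)"
  by (intro eq_BL_mult) simp_all

definition vdiff :: falg where "vdiff = vv - vvi"

lemma vdiff_commute: "vdiff * x = x * vdiff"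
  by (simp add: vdiff_def vv_def vvi_def algebra_simps sc_commute)

lemma vdiff_commute_left: "x * (vdiff * y) = vdiff * (x * y)"
  by (metis vdiff_commute mult.assoc)

lemma tinv_eq: "tinv t = t - vdiff"
  by (simp add: tinv_def vdiff_def)

lemma tinv_quadratic:
  "t * tinv t = (t - vv) * (t + vvi) + 1" "tinv t * t = (t - vv) * (t + vvi) + 1"
proof -
  have "vv * vvi = 1"
    by (simp add: vv_def vvi_def lv_def lvinv_def Poly_Mapping.mult_single flip: sc_mult)
  moreover have "vv * t = t * vv" "vvi * t = t * vvi"
    by (simp_all add: vv_def vvi_def sc_commute)
  ultimately show "t * tinv t = (t - vv) * (t + vvi) + 1" "tinv t * t = (t - vv) * (t + vvi) + 1"
    by (simp_all add: tinv_def algebra_simps)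
qed

abbreviation bTi :: "nat \<Rightarrow> falg" where "bTi k \<equiv> tinv (bT k)"

lemma BL_quadratic: "1 \<le> i \<Longrightarrow> i \<le> n - 1 \<Longrightarrow> eq_BL n ((bT i - vv) * (bT i + vvi)) 0"
  unfolding eq_BL_def diff_zero rel_BL_def by (rule tsideal.base) blast

lemma BL_braid:
  "1 \<le> i \<Longrightarrow> i \<le> n - 2 \<Longrightarrow> eq_BL n (bT i * bT (i+1) * bT i) (bT (i+1) * bT i * bT (i+1))"
  unfolding eq_BL_def rel_BL_def by (rule tsideal.base) blast

lemma BL_T_commute:
  "1 \<le> i \<Longrightarrow> i \<le> n - 1 \<Longrightarrow> 1 \<le> j \<Longrightarrow> j \<le> n - 1 \<Longrightarrow> i + 2 \<le> j \<or> j + 2 \<le> i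
    \<Longrightarrow> eq_BL n (bT i * bT j) (bT j * bT i)"
  unfolding eq_BL_def rel_BL_def by (rule tsideal.base) blast

lemma BL_TXT: "1 \<le> i \<Longrightarrow> i \<le> n - 1 \<Longrightarrow> eq_BL n (bT i * bX i * bT i) (bX (i+1))"
  unfolding eq_BL_def rel_BL_def by (rule tsideal.base) blast

lemma BL_TX_commute:
  "1 \<le> i \<Longrightarrow> i \<le> n - 1 \<Longrightarrow> 1 \<le> j \<Longrightarrow> j \<le> n \<Longrightarrow> j \<noteq> i \<Longrightarrow> j \<noteq> i + 1
    \<Longrightarrow> eq_BL n (bT i * bX j) (bX j * bT i)"
  unfolding eq_BL_def rel_BL_def by (rule tsideal.base) blast

lemma BL_T_Tinv: "1 \<le> i \<Longrightarrow> i \<le> n - 1 \<Longrightarrow> eq_BL n (bT i * bTi i) 1"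
  using eq_BL_add[OF BL_quadratic eq_BL_refl, of i n 1] by (simp add: tinv_quadratic)

lemma BL_Tinv_T: "1 \<le> i \<Longrightarrow> i \<le> n - 1 \<Longrightarrow> eq_BL n (bTi i * bT i) 1"
  using eq_BL_add[OF BL_quadratic eq_BL_refl, of i n 1] by (simp add: tinv_quadratic)

lemma BL_T_square: "1 \<le> i \<Longrightarrow> i \<le> n - 1 \<Longrightarrow> eq_BL n (bT i * bT i) (1 + vdiff * bT i)"
proof -
  assume "1 \<le> i" "i \<le> n - 1"
  then have "eq_BL n (bT i * bTi i + vdiff * bT i) (1 + vdiff * bT i)"
    by (intro eq_BL_add BL_T_Tinv) simp_all
  then show ?thesis
    by (simp add: tinv_eq algebra_simps vdiff_commute)
qed

lemma eq_BL_commute_tinv: "eq_BL n (t * y) (y * t) \<Longrightarrow> eq_BL n (tinv t * y) (y * tinv t)"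
proof -
  assume "eq_BL n (t * y) (y * t)"
  then have "eq_BL n (t * y - vdiff * y) (y * t - y * vdiff)"
    by (rule eq_BL_diff) (simp add: vdiff_commute)
  then show ?thesis
    by (simp add: tinv_eq algebra_simps)
qed

lemma BL_Tinv_T_commute:
  "1 \<le> i \<Longrightarrow> i \<le> n - 1 \<Longrightarrow> 1 \<le> j \<Longrightarrow> j \<le> n - 1 \<Longrightarrow> i + 2 \<le> j \<or> j + 2 \<le> i
    \<Longrightarrow> eq_BL n (bTi i * bT j) (bT j * bTi i)"
  by (rule eq_BL_commute_tinv, rule BL_T_commute) auto

lemma BL_Tinv_X_commute:
  "1 \<le> i \<Longrightarrow> i \<le> n - 1 \<Longrightarrow> 1 \<le> j \<Longrightarrow> j \<le> n \<Longrightarrow> j \<noteq> i \<Longrightarrow> j \<noteq> i + 1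
    \<Longrightarrow> eq_BL n (bTi i * bX j) (bX j * bTi i)"
  by (rule eq_BL_commute_tinv, rule BL_TX_commute) auto

lemma eq_BL_commute_prod_list:
  "(\<And>z. z \<in> set zs \<Longrightarrow> eq_BL n (x * z) (z * x)) \<Longrightarrow> eq_BL n (x * prod_list zs) (prod_list zs * x)"
proof (induction zs)
  case Nil
  then show ?case by simp
next
  case (Cons z zs)
  have "x * prod_list (z # zs) = (x * z) * prod_list zs"
    by (simp add: mult.assoc)
  also have "eq_BL n \<dots> (z * (x * prod_list zs))"
    using Cons.prems eq_BL_mult_right[of n "x * z" "z * x"] by (simp add: mult.assoc)
  also have "eq_BL n \<dots> (z * (prod_list zs * x))"
    using Cons by (simp add: eq_BL_mult_left)
  finally show ?case
    by (simp add: mult.assoc)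
qed

lemma eq_BL_commute_cancel:
  assumes "eq_BL n (u * y) (y * u)" "eq_BL n (u * t) 1"
  shows "eq_BL n (u * (y * t)) y"
proof -
  have "eq_BL n ((u * y) * t) ((y * u) * t)"
    using assms(1) by (rule eq_BL_mult_right)
  also have "(y * u) * t = y * (u * t)"
    by (simp add: mult.assoc)
  also have "eq_BL n \<dots> (y * 1)"
    using assms(2) by (rule eq_BL_mult_left)
  finally show ?thesis
    by (simp add: mult.assoc)
qed

lemma eq_BL_prod_list_rev_cancel:
  "(\<And>x. x \<in> set xs \<Longrightarrow> eq_BL n (u x * w x) 1) \<Longrightarrow>
     eq_BL n (prod_list (map u xs) * prod_list (map w (rev xs))) 1"
proof (induction xs)
  case Nil
  then show ?case by simp
next
  case (Cons x xs)
  have "prod_list (map u (x # xs)) * prod_list (map w (rev (x # xs)))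
      = u x * (prod_list (map u xs) * prod_list (map w (rev xs))) * w x"
    by (simp add: mult.assoc)
  also have "eq_BL n \<dots> (u x * 1 * w x)"
    using Cons by (intro eq_BL_mult_middle) simp
  also have "eq_BL n \<dots> 1"
    using Cons.prems by simp
  finally show ?case .
qed

lemma BL_prod_Tinv_prod_T_rev:
  "1 \<le> a \<Longrightarrow> b \<le> n \<Longrightarrow> eq_BL n (prod_list (map bTi [a..<b]) * prod_list (map bT (rev [a..<b]))) 1"
  by (rule eq_BL_prod_list_rev_cancel, rule BL_Tinv_T) auto

lemma BL_prod_T_prod_Tinv_rev:
  "1 \<le> a \<Longrightarrow> b \<le> n \<Longrightarrow> eq_BL n (prod_list (map bT [a..<b]) * prod_list (map bTi (rev [a..<b]))) 1"
  by (rule eq_BL_prod_list_rev_cancel, rule BL_T_Tinv) auto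

lemma BL_Tinv_X_Tinv: "1 \<le> j \<Longrightarrow> j \<le> n - 1 \<Longrightarrow> eq_BL n (bTi j * bX (j+1) * bTi j) (bX j)"
proof -
  assume j: "1 \<le> j" "j \<le> n - 1"
  have "eq_BL n (bTi j * bX (j+1) * bTi j) ((bTi j * bT j) * bX j * (bT j * bTi j))"
    using eq_BL_mult_middle[OF eq_BL_sym[OF BL_TXT[OF j]], of "bTi j" "bTi j"]
    by (simp add: mult.assoc)
  also have "eq_BL n \<dots> (1 * bX j * 1)"
    using j by (intro eq_BL_mult eq_BL_refl BL_T_Tinv BL_Tinv_T)
  finally show ?thesis
    by simp
qed

lemma BL_T_prod_conj_X1:
  "m < n \<Longrightarrow>
     eq_BL n (prod_list (map bT (rev [1..<m+1])) * bX 1 * prod_list (map bT [1..<m+1])) (bX (m+1))"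
proof (induction m)
  case 0
  then show ?case by simp
next
  case (Suc m)
  have "prod_list (map bT (rev [1..<Suc m+1])) * bX 1 * prod_list (map bT [1..<Suc m+1])
      = bT (m+1) * (prod_list (map bT (rev [1..<m+1])) * bX 1 * prod_list (map bT [1..<m+1])) * bT (m+1)"
    by (simp add: mult.assoc)
  also have "eq_BL n \<dots> (bT (m+1) * bX (m+1) * bT (m+1))"
    using Suc by (intro eq_BL_mult_middle) simp
  also have "eq_BL n \<dots> (bX (Suc m + 1))"
    using BL_TXT[of "m+1" n] Suc.prems by simp
  finally show ?case .
qed

lemma eq_BL_tinv_conj: "eq_BL n (a * a') 1 \<Longrightarrow> eq_BL n (tinv (a * b * a')) (a * tinv b * a')"
proof -
  assume "eq_BL n (a * a') 1"
  then have "eq_BL n (a * b * a' - vdiff * 1) (a * b * a' - vdiff * (a * a'))"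
    by (intro eq_BL_diff eq_BL_mult_left) (simp_all add: eq_BL_sym)
  then show ?thesis
    by (simp add: tinv_eq algebra_simps vdiff_commute_left)
qed

lemma BL_Tinv_braid:
  assumes "1 \<le> i" "i \<le> n - 2"
  shows "eq_BL n (bTi i * bT (i+1) * bT i) (bT (i+1) * bT i * bTi (i+1))"
proof -
  have "eq_BL n (bTi i * bT (i+1) * bT i * 1) (bTi i * bT (i+1) * bT i * (bT (i+1) * bTi (i+1)))"
    using assms by (intro eq_BL_mult_left eq_BL_sym[OF BL_T_Tinv]) simp_all
  also have "\<dots> = bTi i * (bT (i+1) * bT i * bT (i+1)) * bTi (i+1)"
    by (simp add: mult.assoc)
  also have "eq_BL n \<dots> (bTi i * (bT i * bT (i+1) * bT i) * bTi (i+1))"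
    using assms by (intro eq_BL_mult_middle eq_BL_sym[OF BL_braid])
  also have "\<dots> = (bTi i * bT i) * (bT (i+1) * bT i * bTi (i+1))"
    by (simp add: mult.assoc)
  also have "eq_BL n \<dots> (1 * (bT (i+1) * bT i * bTi (i+1)))"
    using assms by (intro eq_BL_mult_right BL_Tinv_T) simp_all
  finally show ?thesis
    by simp
qed

lemma BL_braid_conj:
  assumes "1 \<le> i" "i \<le> n - 2"
  shows "eq_BL n (bTi (i+1) * (bTi i * (bT (i+1) * (bT i * z)))) (bT i * (bTi (i+1) * z))"
proof -
  have "bTi (i+1) * (bTi i * (bT (i+1) * (bT i * z))) = bTi (i+1) * (bTi i * bT (i+1) * bT i) * z"
    by (simp add: mult.assoc)
  also have "eq_BL n \<dots> (bTi (i+1) * (bT (i+1) * bT i * bTi (i+1)) * z)"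
    using assms by (intro eq_BL_mult_middle BL_Tinv_braid)
  also have "\<dots> = (bTi (i+1) * bT (i+1)) * (bT i * (bTi (i+1) * z))"
    by (simp add: mult.assoc)
  also have "eq_BL n \<dots> (1 * (bT i * (bTi (i+1) * z)))"
    using assms by (intro eq_BL_mult_right BL_Tinv_T) simp_all
  finally show ?thesis
    by simp
qed

lemma BL_T_prod_X1:
  assumes "m < n"
  shows "eq_BL n (prod_list (map bT (rev [1..<m+1])) * bX 1) (bX (m+1) * prod_list (map bTi (rev [1..<m+1])))"
proof -
  let ?P = "prod_list (map bT (rev [1..<m+1]))"
  let ?Q = "prod_list (map bT [1..<m+1])" and ?Qi = "prod_list (map bTi (rev [1..<m+1]))"
  have "eq_BL n (?P * bX 1 * 1) (?P * bX 1 * (?Q * ?Qi))"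
    using assms by (intro eq_BL_mult_left eq_BL_sym[OF BL_prod_T_prod_Tinv_rev]) simp_all
  also have "\<dots> = (?P * bX 1 * ?Q) * ?Qi"
    by (simp add: mult.assoc)
  also have "eq_BL n \<dots> (bX (m+1) * ?Qi)"
    using assms by (intro eq_BL_mult_right BL_T_prod_conj_X1)
  finally show ?thesis
    by simp
qed

lemma BL_Tinv_commute_T_prod_X1:
  assumes "1 \<le> m" "m + 1 < n"
  shows "eq_BL n (bTi (m+1) * (prod_list (map bT (rev [1..<m])) * bX 1))
           (prod_list (map bT (rev [1..<m])) * bX 1 * bTi (m+1))"
proof -
  have "eq_BL n (bTi (m+1) * prod_list (map bT (rev [1..<m]) @ [bX 1]))
                (prod_list (map bT (rev [1..<m]) @ [bX 1]) * bTi (m+1))"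
  proof (rule eq_BL_commute_prod_list)
    fix z assume "z \<in> set (map bT (rev [1..<m]) @ [bX 1])"
    then consider k where "z = bT k" "1 \<le> k" "k < m" | "z = bX 1"
      by auto
    then show "eq_BL n (bTi (m+1) * z) (z * bTi (m+1))"
      by cases (use assms in \<open>simp_all add: BL_Tinv_T_commute BL_Tinv_X_commute\<close>)
  qed
  then show ?thesis
    by (simp add: mult.assoc)
qed

lemma BL_X_commute_prod_Tinv:
  "m < n \<Longrightarrow> eq_BL n (bX (m+1) * prod_list (map bTi [1..<m])) (prod_list (map bTi [1..<m]) * bX (m+1))"
proof (rule eq_BL_commute_prod_list)
  fix z assume "m < n" "z \<in> set (map bTi [1..<m])"
  then obtain k where "z = bTi k" "1 \<le> k" "k < m" "m < n"
    by auto
  then show "eq_BL n (bX (m+1) * z) (z * bX (m+1))"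
    by (simp add: eq_BL_sym BL_Tinv_X_commute)
qed

section \<open>Images of the generators\<close>

definition phiv_T :: "nat \<Rightarrow> nat \<Rightarrow> falg" where
  "phiv_T im k =
     (if k < im then bT k else if k = im then bT im * bT (im+1) * bTi im else bT (k+1))"

definition Tinv_palindrome :: "nat \<Rightarrow> nat \<Rightarrow> falg" where
  "Tinv_palindrome im j = prod_list (map bTi [j..<im]) * bTi im * prod_list (map bTi (rev [j..<im]))"

lemma phi_T: "1 \<le> k \<Longrightarrow> k \<le> n - 1 \<Longrightarrow> phi n (g (GT k)) = bT k"
  by (simp add: phi_def phi_gen_def)

lemma phi_RhoInv: "phi n (g GRhoInv) = prod_list (map bT (rev [1..<n])) * bX 1"
  by (simp add: phi_def phi_gen_def phiRhoInv_def)

lemma phi_phiE_T: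
  assumes "1 \<le> k" "k < r" "im < r"
  shows "phi (Suc r) (phiE r im (g (GT k))) = phiv_T im k"
proof -
  have "eT (Suc r) m = g (GT m)" if "m \<le> r" for m
    using that by (simp add: eT_def)
  moreover have "phi (Suc r) (g (GT m)) = bT m" if "1 \<le> m" "m \<le> r" for m
    using that by (simp add: phi_T)
  ultimately show ?thesis
    using assms by (simp add: phiE_def phiE_gen_def phi_mult phi_tinv phiv_T_def Let_def)
qed

lemma phi_phiE_RhoInv:
  "im < r \<Longrightarrow> phi (r+1) (phiE r im (g GRhoInv)) = prod_list (map bT (rev [1..<r+1])) * bX 1 * bT (im+1)"
  by (simp add: phiE_def phiE_gen_def eT_def phi_mult phi_T phi_RhoInv)

lemma upt_split_at: "a \<le> m \<Longrightarrow> m < b \<Longrightarrow> [a..<b] = [a..<m] @ m # [Suc m..<b]"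
  using upt_add_eq_append[of a m "b - m"] upt_conv_Cons[of m b] by simp

lemma upt_split_at_two:
  "1 \<le> im \<Longrightarrow> im < r \<Longrightarrow> [1..<r+1] = [1..<im] @ im # (im + 1) # [im+2..<r+1]"
  using upt_split_at[of 1 im "r+1"] upt_conv_Cons[of "Suc im" "r+1"] by simp

lemma map_phiv_T:
  assumes "1 \<le> im" "im < r"
  shows "map (\<lambda>k. h (phiv_T im k)) [1..<r]
           = map (\<lambda>k. h (bT k)) [1..<im] @ h (phiv_T im im) # map (\<lambda>k. h (bT k)) [im+2..<r+1]"
proof -
  have "[1..<r] = [1..<im] @ im # [Suc im..<r]"
    using assms by (intro upt_split_at) simp_all
  moreover have "map (\<lambda>k. h (phiv_T im k)) [Suc im..<r] = map (\<lambda>k. h (bT k)) (map Suc [Suc im..<r])"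
    by (simp add: phiv_T_def)
  ultimately show ?thesis
    by (simp add: phiv_T_def map_Suc_upt)
qed

lemma X1_image_reduce:
  assumes r: "im < r" and im: "1 \<le> im"
  shows "eq_BL (r+1)
    (prod_list (map (\<lambda>k. tinv (phiv_T im k)) [1..<r]) * (prod_list (map bT (rev [1..<r+1])) * bX 1) * bT (im+1))
    (prod_list (map bTi [1..<im]) * (bT im * (bT im * (prod_list (map bT (rev [1..<im])) * bX 1))))"
proof -
  let ?n = "r+1"
  let ?A = "prod_list (map bTi [1..<im])" and ?D = "prod_list (map bT (rev [1..<im]))"
  let ?B = "prod_list (map bTi [im+2..<r+1])" and ?C = "prod_list (map bT (rev [im+2..<r+1]))"
  let ?t = "tinv (phiv_T im im)" and ?Z = "?D * bX 1 * bT (im+1)"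
  have "prod_list (map (\<lambda>k. tinv (phiv_T im k)) [1..<r])
      * (prod_list (map bT (rev [1..<r+1])) * bX 1) * bT (im+1)
      = ?A * (?t * ((?B * ?C) * (bT (im+1) * (bT im * ?Z))))"
    using map_phiv_T[OF im r, of tinv] upt_split_at_two[OF im r]
    by (simp del: upt_Suc add: mult.assoc)
  also have "eq_BL ?n \<dots> (?A * (?t * (1 * (bT (im+1) * (bT im * ?Z)))))"
    using r by (intro eq_BL_mult_left eq_BL_mult_right BL_prod_Tinv_prod_T_rev) simp_all
  also have "eq_BL ?n \<dots> (?A * ((bT im * bTi (im+1) * bTi im) * (bT (im+1) * (bT im * ?Z))))"
  proof (unfold mult_1_left, intro eq_BL_mult_left eq_BL_mult_right)
    have "eq_BL ?n (bT im * bTi im) 1"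
      using r im by (intro BL_T_Tinv) simp_all
    from eq_BL_tinv_conj[OF this, of "bT (im+1)"]
    show "eq_BL ?n ?t (bT im * bTi (im+1) * bTi im)"
      by (simp add: phiv_T_def)
  qed
  also have "\<dots> = ?A * (bT im * (bTi (im+1) * (bTi im * (bT (im+1) * (bT im * ?Z)))))"
    by (simp add: mult.assoc)
  also have "eq_BL ?n \<dots> (?A * (bT im * (bT im * (bTi (im+1) * ?Z))))"
    using r im by (intro eq_BL_mult_left BL_braid_conj) simp_all
  also have "eq_BL ?n \<dots> (?A * (bT im * (bT im * (?D * bX 1))))"
    using r im
    by (intro eq_BL_mult_left eq_BL_commute_cancel BL_Tinv_commute_T_prod_X1 BL_Tinv_T) simp_all
  finally show ?thesis .
qed

lemma X1_image_expand:
  assumes r: "im < r" and im: "1 \<le> im"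
  shows "eq_BL (r+1)
    (prod_list (map bTi [1..<im]) * (bT im * (bT im * (prod_list (map bT (rev [1..<im])) * bX 1))))
    (bX 1 + vdiff * bX (im+1) * Tinv_palindrome im 1)"
proof -
  let ?n = "r+1"
  let ?A = "prod_list (map bTi [1..<im])" and ?A' = "prod_list (map bTi (rev [1..<im]))"
  let ?D = "prod_list (map bT (rev [1..<im]))"
  have "?A * (bT im * (bT im * (?D * bX 1))) = ?A * (bT im * bT im) * (?D * bX 1)"
    by (simp add: mult.assoc)
  also have "eq_BL ?n \<dots> (?A * (1 + vdiff * bT im) * (?D * bX 1))"
    using r im by (intro eq_BL_mult_middle BL_T_square) simp_all
  also have "\<dots> = (?A * ?D) * bX 1 + vdiff * (?A * (bT im * ?D * bX 1))"
    by (simp add: algebra_simps vdiff_commute_left)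
  also have "eq_BL ?n \<dots> (1 * bX 1 + vdiff * (?A * (bX (im+1) * (bTi im * ?A'))))"
  proof (intro eq_BL_add eq_BL_mult_right eq_BL_mult_left)
    show "eq_BL ?n (?A * ?D) 1"
      using r by (intro BL_prod_Tinv_prod_T_rev) simp_all
    show "eq_BL ?n (bT im * ?D * bX 1) (bX (im+1) * (bTi im * ?A'))"
      using BL_T_prod_X1[of im ?n] r im by simp
  qed
  also have "eq_BL ?n \<dots> (bX 1 + vdiff * ((bX (im+1) * ?A) * (bTi im * ?A')))"
    using eq_BL_mult_right[OF eq_BL_sym[OF BL_X_commute_prod_Tinv[of im ?n]], of "bTi im * ?A'"] r
    by (simp add: eq_BL_add eq_BL_mult_left mult.assoc)
  also have "\<dots> = bX 1 + vdiff * bX (im+1) * Tinv_palindrome im 1"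
    by (simp add: Tinv_palindrome_def mult.assoc)
  finally show ?thesis .
qed

lemma X_correction_conj:
  assumes r: "im < r" and j: "1 \<le> j" "j < im"
  shows "eq_BL (r+1) (bT j * (bX j + vdiff * bX (im+1) * Tinv_palindrome im j) * bT j)
           (bX (j+1) + vdiff * bX (im+1) * Tinv_palindrome im (j+1))"
proof -
  let ?n = "r+1" and ?W = "Tinv_palindrome im (j+1)"
  have "bT j * (bX j + vdiff * bX (im+1) * Tinv_palindrome im j) * bT j
      = bT j * bX j * bT j + vdiff * ((bT j * bX (im+1)) * (bTi j * ?W * (bTi j * bT j)))"
    using j by (simp add: Tinv_palindrome_def upt_conv_Cons algebra_simps vdiff_commute_left)
  also have "eq_BL ?n \<dots> (bX (j+1) + vdiff * ((bX (im+1) * bT j) * (bTi j * ?W * 1)))"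
    using r j by (intro eq_BL_add eq_BL_mult_left eq_BL_mult BL_TXT BL_TX_commute BL_Tinv_T) simp_all
  also have "\<dots> = bX (j+1) + vdiff * (bX (im+1) * ((bT j * bTi j) * ?W))"
    by (simp add: mult.assoc)
  also have "eq_BL ?n \<dots> (bX (j+1) + vdiff * (bX (im+1) * (1 * ?W)))"
    using r j by (intro eq_BL_add eq_BL_refl eq_BL_mult_left eq_BL_mult_right BL_T_Tinv) simp_all
  finally show ?thesis
    by (simp add: mult.assoc)
qed

lemma Xr_image_reduce:
  assumes r: "im < r" and im: "1 \<le> im"
  shows "eq_BL (r+1)
    (prod_list (map bT (rev [1..<r+1])) * bX 1 * bT (im+1) * prod_list (map (phiv_T im) [1..<r]))
    (bX (r+1))"
proof -
  let ?n = "r+1"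
  let ?A = "prod_list (map bT [1..<im])" and ?B = "prod_list (map bT [im+2..<r+1])"
  let ?P = "prod_list (map bT (rev [1..<r+1]))"
  have "?P * bX 1 * bT (im+1) * prod_list (map (phiv_T im) [1..<r])
      = ?P * bX 1 * ((bT (im+1) * ?A) * (bT im * (bT (im+1) * (bTi im * ?B))))"
    unfolding map_phiv_T[OF im r, of "\<lambda>x. x"] by (simp del: upt_Suc add: mult.assoc phiv_T_def)
  also have "eq_BL ?n \<dots> (?P * bX 1 * ((?A * bT (im+1)) * (bT im * (bT (im+1) * (bTi im * ?B)))))"
  proof (intro eq_BL_mult_left eq_BL_mult_right eq_BL_commute_prod_list)
    fix z assume "z \<in> set (map bT [1..<im])"
    then obtain k where "z = bT k" "1 \<le> k" "k < im"
      by auto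
    then show "eq_BL ?n (bT (im+1) * z) (z * bT (im+1))"
      using r by (simp add: BL_T_commute)
  qed
  also have "\<dots> = ?P * bX 1 * (?A * ((bT (im+1) * bT im * bT (im+1)) * (bTi im * ?B)))"
    by (simp add: mult.assoc)
  also have "eq_BL ?n \<dots> (?P * bX 1 * (?A * ((bT im * bT (im+1) * bT im) * (bTi im * ?B))))"
    using r im by (intro eq_BL_mult_left eq_BL_mult_right eq_BL_sym[OF BL_braid]) simp_all
  also have "\<dots> = ?P * bX 1 * (?A * (bT im * bT (im+1)) * (bT im * bTi im) * ?B)"
    by (simp add: mult.assoc)
  also have "eq_BL ?n \<dots> (?P * bX 1 * (?A * (bT im * bT (im+1)) * 1 * ?B))"
    using r im by (intro eq_BL_mult_left eq_BL_mult_middle BL_T_Tinv) simp_all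
  also have "\<dots> = ?P * bX 1 * prod_list (map bT [1..<r+1])"
    unfolding upt_split_at_two[OF im r] by (simp del: upt_Suc add: mult.assoc)
  also have "eq_BL ?n \<dots> (bX (r+1))"
    using BL_T_prod_conj_X1[of r ?n] by simp
  finally show ?thesis .
qed

section \<open>Preimages of the X_j in H^e_r\<close>

primrec X_preimage_up :: "nat \<Rightarrow> nat \<Rightarrow> falg" where
  "X_preimage_up r 0 = prod_list (map (\<lambda>k. tinv (g (GT k))) [1..<r]) * g GRhoInv"
| "X_preimage_up r (Suc d) = g (GT (Suc d)) * X_preimage_up r d * g (GT (Suc d))"

primrec X_preimage_down :: "nat \<Rightarrow> nat \<Rightarrow> falg" where
  "X_preimage_down r 0 = g GRhoInv * prod_list (map (\<lambda>k. g (GT k)) [1..<r])"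
| "X_preimage_down r (Suc d) =
     tinv (g (GT (r - 1 - d))) * X_preimage_down r d * tinv (g (GT (r - 1 - d)))"

lemma phi_X_preimage_up: "d < r \<Longrightarrow> eq_BL r (phi r (X_preimage_up r d)) (bX (d+1))"
proof (induction d)
  case 0
  have images: "map (phi r \<circ> (\<lambda>k. tinv (g (GT k)))) [1..<r] = map bTi [1..<r]"
    by (auto simp: phi_tinv phi_T)
  have "phi r (X_preimage_up r 0)
      = prod_list (map bTi [1..<r]) * prod_list (map bT (rev [1..<r])) * bX 1"
    unfolding X_preimage_up.simps phi_mult phi_prod_list map_map images phi_RhoInv
    by (simp add: mult.assoc)
  also have "eq_BL r \<dots> (1 * bX 1)"
    by (intro eq_BL_mult_right BL_prod_Tinv_prod_T_rev) simp_all
  finally show ?case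
    by simp
next
  case (Suc d)
  then have "phi r (X_preimage_up r (Suc d)) = bT (d+1) * phi r (X_preimage_up r d) * bT (d+1)"
    by (simp add: phi_mult phi_T)
  also have "eq_BL r \<dots> (bT (d+1) * bX (d+1) * bT (d+1))"
    using Suc by (intro eq_BL_mult_middle) simp
  also have "eq_BL r \<dots> (bX (Suc d + 1))"
    using BL_TXT[of "d+1" r] Suc.prems by simp
  finally show ?case .
qed

lemma phi_phiE_X_preimage_up:
  assumes r: "im < r" and im: "1 \<le> im"
  shows "d < im \<Longrightarrow> eq_BL (r+1) (phi (r+1) (phiE r im (X_preimage_up r d)))
           (bX (d+1) + vdiff * bX (im+1) * Tinv_palindrome im (d+1))"
proof (induction d)
  case 0
  have images: "map (phi (r+1) \<circ> (phiE r im \<circ> (\<lambda>k. tinv (g (GT k))))) [1..<r]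
      = map (\<lambda>k. tinv (phiv_T im k)) [1..<r]"
    using r by (auto simp: phi_tinv phiE_tinv phi_phiE_T)
  have "phi (r+1) (phiE r im (X_preimage_up r 0))
      = prod_list (map (\<lambda>k. tinv (phiv_T im k)) [1..<r])
        * (prod_list (map bT (rev [1..<r+1])) * bX 1) * bT (im+1)"
    unfolding X_preimage_up.simps phi_mult phiE_mult phiE_prod_list phi_prod_list map_map images
      phi_phiE_RhoInv[OF r]
    by (simp del: upt_Suc add: mult.assoc)
  also have "eq_BL (r+1) \<dots> (bX 1 + vdiff * bX (im+1) * Tinv_palindrome im 1)"
    using X1_image_reduce[OF r im] X1_image_expand[OF r im] by (rule eq_BL_trans)
  finally show ?case
    by simp
next
  case (Suc d)
  then have "phi (r+1) (phiE r im (X_preimage_up r (Suc d)))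
      = bT (d+1) * phi (r+1) (phiE r im (X_preimage_up r d)) * bT (d+1)"
    using r by (simp add: phi_mult phiE_mult phi_phiE_T phiv_T_def)
  also have "eq_BL (r+1) \<dots> (bT (d+1) * (bX (d+1) + vdiff * bX (im+1) * Tinv_palindrome im (d+1)) * bT (d+1))"
    using Suc by (intro eq_BL_mult_middle) simp
  also have "eq_BL (r+1) \<dots> (bX (Suc d + 1) + vdiff * bX (im+1) * Tinv_palindrome im (Suc d + 1))"
    using X_correction_conj[OF r, of "d+1"] Suc.prems by simp
  finally show ?case .
qed

lemma phi_X_preimage_down: "d < r \<Longrightarrow> eq_BL r (phi r (X_preimage_down r d)) (bX (r - d))"
proof (induction d)
  case 0
  have images: "map (phi r \<circ> (\<lambda>k. g (GT k))) [1..<r] = map bT [1..<r]"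
    by (auto simp: phi_T)
  have "phi r (X_preimage_down r 0)
      = prod_list (map bT (rev [1..<(r-1)+1])) * bX 1 * prod_list (map bT [1..<(r-1)+1])"
    unfolding X_preimage_down.simps phi_mult phi_prod_list map_map images phi_RhoInv
    using 0 by simp
  also have "eq_BL r \<dots> (bX (r-1+1))"
    using 0 by (intro BL_T_prod_conj_X1) simp
  finally show ?case
    using 0 by simp
next
  case (Suc d)
  define j where "j = r - 1 - d"
  have j: "1 \<le> j" "j \<le> r - 1" and shift: "r - d = j + 1" "r - Suc d = j"
    using Suc.prems by (simp_all add: j_def)
  have "phi r (X_preimage_down r (Suc d)) = bTi j * phi r (X_preimage_down r d) * bTi j"
    using j by (simp add: j_def phi_mult phi_tinv phi_T)
  also have "eq_BL r \<dots> (bTi j * bX (j+1) * bTi j)"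
    using Suc shift by (intro eq_BL_mult_middle) simp
  also have "eq_BL r \<dots> (bX j)"
    using j by (rule BL_Tinv_X_Tinv)
  finally show ?case
    by (simp only: shift)
qed

lemma phi_phiE_X_preimage_down:
  assumes r: "im < r" and im: "1 \<le> im"
  shows "im + d < r \<Longrightarrow> eq_BL (r+1) (phi (r+1) (phiE r im (X_preimage_down r d))) (bX (r - d + 1))"
proof (induction d)
  case 0
  have images: "map (phi (r+1) \<circ> (phiE r im \<circ> (\<lambda>k. g (GT k)))) [1..<r] = map (phiv_T im) [1..<r]"
    using r by (auto simp: phi_phiE_T)
  have "phi (r+1) (phiE r im (X_preimage_down r 0))
      = prod_list (map bT (rev [1..<r+1])) * bX 1 * bT (im+1) * prod_list (map (phiv_T im) [1..<r])"
    unfolding X_preimage_down.simps phi_mult phiE_mult phiE_prod_list phi_prod_list map_map images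
      phi_phiE_RhoInv[OF r]
    by (simp del: upt_Suc add: mult.assoc)
  also have "eq_BL (r+1) \<dots> (bX (r+1))"
    using r im by (rule Xr_image_reduce)
  finally show ?case
    by simp
next
  case (Suc d)
  define j where "j = r - 1 - d"
  have j: "im < j" "j < r" and shift: "r - d + 1 = j + 1 + 1" "r - Suc d + 1 = j + 1"
    using Suc.prems by (simp_all add: j_def)
  have "phi (r+1) (phiE r im (X_preimage_down r (Suc d)))
      = bTi (j+1) * phi (r+1) (phiE r im (X_preimage_down r d)) * bTi (j+1)"
    using r j by (simp add: j_def phi_mult phiE_mult phi_tinv phiE_tinv phi_phiE_T phiv_T_def)
  also have "eq_BL (r+1) \<dots> (bTi (j+1) * bX (j+1+1) * bTi (j+1))"
    using Suc shift by (intro eq_BL_mult_middle) simp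
  also have "eq_BL (r+1) \<dots> (bX (j+1))"
    using j by (intro BL_Tinv_X_Tinv) simp_all
  finally show ?case
    by (simp only: shift)
qed

lemma phiBL_isI:
  assumes inj_r: "induces_embedding (eq_e r) (eq_BL r) (phi r)"
    and emb_r1: "induces_embedding (eq_e (r+1)) (eq_BL (r+1)) (phi (r+1))"
    and emb: "induces_embedding (eq_e r) (eq_e (r+1)) (phiE r im)"
    and pre: "eq_BL r (phi r y) a"
    and img: "eq_BL (r+1) (phi (r+1) (phiE r im y)) b"
  shows "phiBL_is r im a b"
  unfolding phiBL_is_def
proof (intro allI impI)
  fix y' assume "eq_BL r (phi r y') a"
  with pre have "eq_BL r (phi r y') (phi r y)"
    by (blast intro: eq_BL_trans eq_BL_sym)
  then have "eq_e (r+1) (phiE r im y') (phiE r im y)"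
    using inj_r emb by (simp add: induces_embedding_def)
  then have "eq_BL (r+1) (phi (r+1) (phiE r im y')) (phi (r+1) (phiE r im y))"
    using emb_r1 by (simp add: induces_embedding_def)
  from this img show "eq_BL (r+1) (phi (r+1) (phiE r im y')) b"
    by (rule eq_BL_trans)
qed

theorem mainTheorem9:
  fixes r im :: nat
  assumes hr: "r > 2"
    and him: "1 \<le> im" "im \<le> r - 1"
    and iso_r: "induces_iso (eq_e r) (eq_BL r) (phi r)"
    and iso_r1: "induces_iso (eq_e (r+1)) (eq_BL (r+1)) (phi (r+1))"
    and emb: "induces_embedding (eq_e r) (eq_e (r+1)) (phiE r im)"
  shows "(\<forall>i. 1 \<le> i \<and> i < im \<longrightarrow> phiBL_is r im (bT i) (bT i))
       \<and> phiBL_is r im (bT im) (bT im * bT (im+1) * tinv (bT im))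
       \<and> (\<forall>i. im + 1 \<le> i \<and> i \<le> r - 1 \<longrightarrow> phiBL_is r im (bT i) (bT (i+1)))
       \<and> (\<forall>j. 1 \<le> j \<and> j \<le> im \<longrightarrow> phiBL_is r im (bX j)
            (bX j + (vv - vvi) * bX (im+1)
               * prod_list (map (\<lambda>k. tinv (bT k)) [j..<im])
               * tinv (bT im)
               * prod_list (map (\<lambda>k. tinv (bT k)) (rev [j..<im]))))
       \<and> (\<forall>j. im + 1 \<le> j \<and> j \<le> r \<longrightarrow> phiBL_is r im (bX j) (bX (j+1)))"
proof -
  have r: "im < r"
    using hr him by simp
  have "induces_embedding (eq_e r) (eq_BL r) (phi r)"
    and "induces_embedding (eq_e (r+1)) (eq_BL (r+1)) (phi (r+1))"
    using iso_r iso_r1 by (simp_all add: induces_iso_def)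
  note transport = phiBL_isI[OF this emb]
  have T: "phiBL_is r im (bT i) (phiv_T im i)" if "1 \<le> i" "i \<le> r - 1" for i
    using that r by (intro transport[of "g (GT i)"]) (simp_all add: phi_T phi_phiE_T)
  have X_low: "phiBL_is r im (bX j) (bX j + vdiff * bX (im+1) * Tinv_palindrome im j)"
    if "1 \<le> j" "j \<le> im" for j
    using transport[OF phi_X_preimage_up phi_phiE_X_preimage_up[OF r him(1)], of "j - 1"] that r
    by simp
  have X_high: "phiBL_is r im (bX j) (bX (j+1))" if "im + 1 \<le> j" "j \<le> r" for j
    using transport[OF phi_X_preimage_down phi_phiE_X_preimage_down[OF r him(1)], of "r - j"] that
    by simp
  show ?thesis
  proof (intro conjI allI impI)
    fix i assume "1 \<le> i \<and> i < im"
    then show "phiBL_is r im (bT i) (bT i)"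
      using T[of i] him by (simp add: phiv_T_def)
  next
    show "phiBL_is r im (bT im) (bT im * bT (im+1) * tinv (bT im))"
      using T[of im] him by (simp add: phiv_T_def)
  next
    fix i assume "im + 1 \<le> i \<and> i \<le> r - 1"
    then show "phiBL_is r im (bT i) (bT (i+1))"
      using T[of i] by (simp add: phiv_T_def)
  qed (use X_low X_high in \<open>auto simp: vdiff_def Tinv_palindrome_def mult.assoc\<close>)
qed

end
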